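(* Let $X$ be a one-good random valuation whose values are bounded from below by some $x_0\ge0$ (i.e., $X\ge x_0$ almost surely). Let $\lambda$ be a real number and let $\mu=(q,s)$ be an IC one-good mechanism with $q(x)\le\lambda$ for all $x\ge x_0$. Then \[ R(\mu;X)\le(\lambda-q(x_0))\,\textsc{Rev}(X)+s(x_0). \]
   Context: A one-good random valuation is a nonnegative real random variable. A one-good mechanism is a pair $\mu=(q,s)$ of Borel functions $q:\mathbb{R}_+\to[0,1]$, $s:\mathbb{R}_+\to\mathbb{R}$, with buyer payoff $b(x)=q(x)x-s(x)$; it is IC if $b(x)\ge q(\tilde x)x-s(\tilde x)$ for all $x,\tilde x\ge0$, and IR if $b(x)\ge0$ for all $x$. $R(\mu;X)=\mathbb{E}[s(X)]$, and $\textsc{Rev}(X)$ is the supremum of $R(\mu;X)$ over all IC and IR mechanisms (equivalently $\sup_{p\ge0}p\,\mathbb{P}[X\ge p]$). *)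

theory Defs
  imports "HOL-Probability.Probability"
begin

definition random_valuation :: "'a measure \<Rightarrow> ('a \<Rightarrow> real) \<Rightarrow> bool" where
  "random_valuation M X \<longleftrightarrow> prob_space M \<and> X \<in> borel_measurable M \<and> (\<forall>\<omega>\<in>space M. X \<omega> \<ge> 0)"

text \<open>A one-good mechanism (q,s): Borel functions on R+ with q valued in [0,1].
  Functions are total on real; only their values on R+ matter.\<close>
definition one_good_mechanism :: "(real \<Rightarrow> real) \<Rightarrow> (real \<Rightarrow> real) \<Rightarrow> bool" where
  "one_good_mechanism q s \<longleftrightarrow>
     q \<in> borel_measurable (restrict_space borel {0..}) \<and>
     s \<in> borel_measurable (restrict_space borel {0..}) \<and>
     (\<forall>x\<ge>0. 0 \<le> q x \<and> q x \<le> 1)"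

definition buyer_payoff :: "(real \<Rightarrow> real) \<Rightarrow> (real \<Rightarrow> real) \<Rightarrow> real \<Rightarrow> real" where
  "buyer_payoff q s x = q x * x - s x"

definition IC :: "(real \<Rightarrow> real) \<Rightarrow> (real \<Rightarrow> real) \<Rightarrow> bool" where
  "IC q s \<longleftrightarrow> (\<forall>x\<ge>0. \<forall>y\<ge>0. buyer_payoff q s x \<ge> q y * x - s y)"

definition IR :: "(real \<Rightarrow> real) \<Rightarrow> (real \<Rightarrow> real) \<Rightarrow> bool" where
  "IR q s \<longleftrightarrow> (\<forall>x\<ge>0. buyer_payoff q s x \<ge> 0)"

definition ext_expectation :: "'a measure \<Rightarrow> ('a \<Rightarrow> real) \<Rightarrow> ereal" where
  "ext_expectation M f =
     enn2ereal (\<integral>\<^sup>+ \<omega>. ennreal (f \<omega>) \<partial>M) - enn2ereal (\<integral>\<^sup>+ \<omega>. ennreal (- f \<omega>) \<partial>M)"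

definition revenue :: "'a measure \<Rightarrow> ('a \<Rightarrow> real) \<Rightarrow> (real \<Rightarrow> real) \<Rightarrow> (real \<Rightarrow> real) \<Rightarrow> ereal" where
  "revenue M X q s = ext_expectation M (\<lambda>\<omega>. s (X \<omega>))"

definition Rev :: "'a measure \<Rightarrow> ('a \<Rightarrow> real) \<Rightarrow> ereal" where
  "Rev M X = Sup {revenue M X q s | q s. one_good_mechanism q s \<and> IC q s \<and> IR q s}"

end

theory Submission
  imports Defs
begin

text \<open>On \<open>[x0, \<infinity>)\<close> the mechanism charges \<open>s x0\<close> plus the payment of the residual mechanism
  \<open>((q - q x0) / c, (s - s x0) / c)\<close>, where \<open>c = \<lambda> - q x0\<close>; the residual mechanism is IC and
  IR, so its revenue \<open>E[s(X) - s(x0)] / c\<close> is at most \<open>Rev(X)\<close>. When \<open>c = 0\<close> the allocation is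
  constant on \<open>[x0, \<infinity>)\<close>, and then so is the payment.\<close>

lemma enn2ereal_diff_eq_if_add_eq:
  fixes P H N :: ennreal and a :: real
  assumes "P + ennreal (- a) = H + ennreal a + N" and "N < top"
  shows "enn2ereal P - enn2ereal N = enn2ereal H + ereal a"
proof -
  have "enn2ereal P + max 0 (- a) = enn2ereal H + max 0 a + enn2ereal N"
    using arg_cong[OF assms(1), of enn2ereal] by (simp add: plus_ennreal.rep_eq ennreal.rep_eq zero_ereal_def)
  moreover obtain n where "enn2ereal N = ereal n"
    using assms(2) by (cases N) (auto simp: ennreal.rep_eq)
  ultimately show ?thesis
    by (cases "enn2ereal P"; cases "enn2ereal H") (auto split: if_splits simp: max_def)
qed

lemma ennreal_plus_neg_split:
  fixes f a :: real assumes "a \<le> f"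
  shows "ennreal f + ennreal (- a) = ennreal (f - a) + ennreal a + ennreal (- f)"
  using assms by (cases "0 \<le> f"; cases "0 \<le> a") (simp_all add: ennreal_plus[symmetric] ennreal_neg)

lemma (in prob_space) ext_expectation_shift:
  assumes f: "f \<in> borel_measurable M" and lower: "AE \<omega> in M. a \<le> f \<omega>"
  shows "ext_expectation M f = enn2ereal (\<integral>\<^sup>+ \<omega>. ennreal (f \<omega> - a) \<partial>M) + ereal a"
proof -
  have "(\<integral>\<^sup>+ \<omega>. ennreal (f \<omega>) + ennreal (- a) \<partial>M) =
        (\<integral>\<^sup>+ \<omega>. ennreal (f \<omega> - a) + ennreal a + ennreal (- f \<omega>) \<partial>M)"
    using lower by (intro nn_integral_cong_AE) (auto elim: eventually_mono simp: ennreal_plus_neg_split)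
  then have split: "(\<integral>\<^sup>+ \<omega>. ennreal (f \<omega>) \<partial>M) + ennreal (- a) =
      (\<integral>\<^sup>+ \<omega>. ennreal (f \<omega> - a) \<partial>M) + ennreal a + (\<integral>\<^sup>+ \<omega>. ennreal (- f \<omega>) \<partial>M)"
    using f by (simp add: nn_integral_add emeasure_space_1)
  have "(\<integral>\<^sup>+ \<omega>. ennreal (- f \<omega>) \<partial>M) \<le> (\<integral>\<^sup>+ \<omega>. ennreal (- a) \<partial>M)"
    using lower by (intro nn_integral_mono_AE) (auto elim!: eventually_mono intro: ennreal_leI)
  then have "(\<integral>\<^sup>+ \<omega>. ennreal (- f \<omega>) \<partial>M) < top"
    by (simp add: emeasure_space_1 le_less_trans)
  with split show ?thesis
    unfolding ext_expectation_def by (rule enn2ereal_diff_eq_if_add_eq)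
qed

lemma IC_allocation_mono:
  assumes "IC q s" "0 \<le> y" "y \<le> x"
  shows "q y \<le> q x"
proof -
  have "q y * x - s y \<le> q x * x - s x" "q x * y - s x \<le> q y * y - s y"
    using assms unfolding IC_def buyer_payoff_def by auto
  then have "0 \<le> (q x - q y) * (x - y)" by (simp add: algebra_simps)
  with assms show ?thesis by (cases "x = y") (auto simp: zero_le_mult_iff)
qed

lemma IC_payment_mono:
  assumes "IC q s" "0 \<le> y" "y \<le> x"
  shows "s y \<le> s x"
proof -
  have "q x * y - s x \<le> q y * y - s y"
    using assms unfolding IC_def buyer_payoff_def by auto
  moreover have "q y * y \<le> q x * y"
    using IC_allocation_mono[OF assms] assms(2) by (simp add: mult_right_mono)
  ultimately show ?thesis by linarith
qed

lemma IC_payment_eq_if_allocation_eq: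
  assumes "IC q s" "0 \<le> x" "0 \<le> y" "q x = q y"
  shows "s x = s y"
  using assms unfolding IC_def buyer_payoff_def by (smt (verit))

lemma IR_if_IC_null_type:
  assumes "IC q s" "0 \<le> x0" "q x0 = 0" "s x0 = 0"
  shows "IR q s"
  using assms unfolding IC_def IR_def by fastforce

lemma measurable_valuation_comp:
  assumes "random_valuation M X" "f \<in> borel_measurable (restrict_space borel {0..})"
  shows "(\<lambda>\<omega>. f (X \<omega>)) \<in> borel_measurable M"
proof -
  have "X \<in> measurable M (restrict_space borel {0..})"
    using assms(1) unfolding random_valuation_def by (intro measurable_restrict_space2) auto
  from measurable_comp[OF this assms(2)] show ?thesis by (simp add: comp_def)
qed

definition residual :: "(real \<Rightarrow> real) \<Rightarrow> real \<Rightarrow> real \<Rightarrow> real \<Rightarrow> real" where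
  "residual f x0 c x = (if x0 \<le> x then (f x - f x0) / c else 0)"

lemma residual_measurable:
  assumes "f \<in> borel_measurable (restrict_space borel {0..})"
  shows "residual f x0 c \<in> borel_measurable (restrict_space borel {0..})"
  unfolding residual_def
proof (rule measurable_If)
  show "(\<lambda>x. (f x - f x0) / c) \<in> borel_measurable (restrict_space borel {0..})"
    using assms by measurable
  have "{x \<in> space (restrict_space borel {0..}). x0 \<le> x} = {0::real..} \<inter> {x0..}" by auto
  then show "{x \<in> space (restrict_space borel {0..}). x0 \<le> x} \<in> sets (restrict_space borel {0..})"
    unfolding sets_restrict_space by auto
qed simp

lemma one_good_mechanism_residual:
  assumes "one_good_mechanism q s" "IC q s" "0 \<le> x0" "0 < c" "\<forall>x\<ge>x0. q x \<le> q x0 + c"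
  shows "one_good_mechanism (residual q x0 c) (residual s x0 c)"
  using assms IC_allocation_mono[OF assms(2) assms(3)]
  unfolding one_good_mechanism_def
  by (auto simp: residual_measurable residual_def divide_le_eq)

lemma IC_residual:
  assumes "IC q s" "0 \<le> x0" "0 < c"
  shows "IC (residual q x0 c) (residual s x0 c)"
  unfolding IC_def
proof (intro allI impI)
  fix x y :: real assume "0 \<le> x" "0 \<le> y"
  have ic: "q b * a - s b \<le> q a * a - s a" if "0 \<le> a" "0 \<le> b" for a b
    using assms(1) that unfolding IC_def buyer_payoff_def by auto
  consider "x0 \<le> x" "x0 \<le> y" | "x0 \<le> x" "\<not> x0 \<le> y" | "\<not> x0 \<le> x" "x0 \<le> y" | "\<not> x0 \<le> x" "\<not> x0 \<le> y"
    by blast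
  then show "residual q x0 c y * x - residual s x0 c y \<le> buyer_payoff (residual q x0 c) (residual s x0 c) x"
  proof cases
    case 1
    with ic[OF \<open>0 \<le> x\<close> \<open>0 \<le> y\<close>] assms(3) show ?thesis
      unfolding buyer_payoff_def residual_def by (simp add: divide_simps) (simp add: algebra_simps)
  next
    case 2
    with ic[OF \<open>0 \<le> x\<close> assms(2)] assms(3) show ?thesis
      unfolding buyer_payoff_def residual_def by (simp add: divide_simps) (simp add: algebra_simps)
  next
    case 3
    \<comment> \<open>a type below \<open>x0\<close> gains less from reporting \<open>y\<close> than type \<open>x0\<close> does\<close>
    then have "(q y - q x0) * x \<le> (q y - q x0) * x0"
      using IC_allocation_mono[OF assms(1,2)] by (intro mult_left_mono) auto
    with 3 ic[OF assms(2) \<open>0 \<le> y\<close>] assms(3) show ?thesis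
      unfolding buyer_payoff_def residual_def by (simp add: divide_simps) (simp add: algebra_simps)
  next
    case 4
    then show ?thesis unfolding buyer_payoff_def residual_def by simp
  qed
qed

lemma IR_residual:
  assumes "IC q s" "0 \<le> x0" "0 < c"
  shows "IR (residual q x0 c) (residual s x0 c)"
  using IC_residual[OF assms] assms(2) by (rule IR_if_IC_null_type) (simp_all add: residual_def)


lemma revenue_residual:
  assumes rv: "random_valuation M X" and "AE \<omega> in M. x0 \<le> X \<omega>"
    and mech: "one_good_mechanism q s" and "IC q s" "0 \<le> x0" "0 < c"
  shows "ereal c * revenue M X (residual q x0 c) (residual s x0 c) =
    enn2ereal (\<integral>\<^sup>+ \<omega>. ennreal (s (X \<omega>) - s x0) \<partial>M)"
proof -
  interpret prob_space M using rv unfolding random_valuation_def by simp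
  have s: "(\<lambda>\<omega>. s (X \<omega>)) \<in> borel_measurable M"
    using rv mech unfolding one_good_mechanism_def by (simp add: measurable_valuation_comp)
  have "(\<lambda>\<omega>. residual s x0 c (X \<omega>)) \<in> borel_measurable M"
    using rv mech unfolding one_good_mechanism_def by (simp add: measurable_valuation_comp residual_measurable)
  moreover have "0 \<le> residual s x0 c x" for x
    using IC_payment_mono[OF \<open>IC q s\<close> \<open>0 \<le> x0\<close>, of x] \<open>0 < c\<close> by (simp add: residual_def)
  ultimately have "revenue M X (residual q x0 c) (residual s x0 c) =
      enn2ereal (\<integral>\<^sup>+ \<omega>. ennreal (residual s x0 c (X \<omega>)) \<partial>M)"
    unfolding revenue_def by (subst ext_expectation_shift[where a = 0]) simp_all
  also have "(\<integral>\<^sup>+ \<omega>. ennreal (residual s x0 c (X \<omega>)) \<partial>M) =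
      (\<integral>\<^sup>+ \<omega>. ennreal (1 / c) * ennreal (s (X \<omega>) - s x0) \<partial>M)"
    using \<open>AE \<omega> in M. x0 \<le> X \<omega>\<close> \<open>0 < c\<close>
    by (intro nn_integral_cong_AE) (auto elim!: eventually_mono simp: residual_def ennreal_mult'[symmetric])
  also have "\<dots> = ennreal (1 / c) * (\<integral>\<^sup>+ \<omega>. ennreal (s (X \<omega>) - s x0) \<partial>M)"
    using s by (simp add: nn_integral_cmult)
  finally show ?thesis
    using \<open>0 < c\<close> by (simp add: times_ennreal.rep_eq mult.assoc[symmetric])
qed

lemma payment_excess_le_Rev:
  assumes rv: "random_valuation M X" and "0 \<le> x0" and lower: "AE \<omega> in M. x0 \<le> X \<omega>"
    and mech: "one_good_mechanism q s" and IC: "IC q s" and cap: "\<forall>x\<ge>x0. q x \<le> lam"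
  shows "enn2ereal (\<integral>\<^sup>+ \<omega>. ennreal (s (X \<omega>) - s x0) \<partial>M) \<le> ereal (lam - q x0) * Rev M X"
proof (cases "lam = q x0")
  case True
  have "AE \<omega> in M. s (X \<omega>) = s x0"
    using lower
  proof (rule eventually_mono)
    fix \<omega> assume "x0 \<le> X \<omega>"
    then have "q (X \<omega>) = q x0"
      using IC_allocation_mono[OF IC \<open>0 \<le> x0\<close>] cap True by (simp add: order.antisym)
    with \<open>x0 \<le> X \<omega>\<close> \<open>0 \<le> x0\<close> show "s (X \<omega>) = s x0"
      by (intro IC_payment_eq_if_allocation_eq[OF IC]) auto
  qed
  then have "(\<integral>\<^sup>+ \<omega>. ennreal (s (X \<omega>) - s x0) \<partial>M) = 0"
    by (subst nn_integral_cong_AE[where v = "\<lambda>_. 0"]) (auto elim!: eventually_mono)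
  with True show ?thesis by (simp add: zero_ereal_def[symmetric] zero_ennreal.rep_eq)
next
  case False
  define c where "c = lam - q x0"
  have "0 < c" using cap False \<open>0 \<le> x0\<close> unfolding c_def by fastforce
  have "one_good_mechanism (residual q x0 c) (residual s x0 c)"
    using cap by (intro one_good_mechanism_residual[OF mech IC \<open>0 \<le> x0\<close> \<open>0 < c\<close>]) (simp add: c_def)
  with IC_residual[OF IC \<open>0 \<le> x0\<close> \<open>0 < c\<close>] IR_residual[OF IC \<open>0 \<le> x0\<close> \<open>0 < c\<close>]
  have "revenue M X (residual q x0 c) (residual s x0 c) \<le> Rev M X"
    unfolding Rev_def by (intro Sup_upper) blast
  then have "ereal c * revenue M X (residual q x0 c) (residual s x0 c) \<le> ereal c * Rev M X"
    using \<open>0 < c\<close> by (intro ereal_mult_left_mono) auto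
  then show ?thesis
    unfolding c_def[symmetric] revenue_residual[OF rv lower mech IC \<open>0 \<le> x0\<close> \<open>0 < c\<close>] .
qed

theorem lemma2:
  fixes M :: "'a measure" and X :: "'a \<Rightarrow> real"
    and x0 lam :: real and q s :: "real \<Rightarrow> real"
  assumes "random_valuation M X"
    and "x0 \<ge> 0"
    and "AE \<omega> in M. X \<omega> \<ge> x0"
    and "one_good_mechanism q s"
    and "IC q s"
    and "\<forall>x\<ge>x0. q x \<le> lam"
  shows "revenue M X q s \<le> ereal (lam - q x0) * Rev M X + ereal (s x0)"
proof -
  interpret prob_space M using assms(1) unfolding random_valuation_def by simp
  have "(\<lambda>\<omega>. s (X \<omega>)) \<in> borel_measurable M"
    using assms(1,4) unfolding one_good_mechanism_def by (simp add: measurable_valuation_comp)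
  moreover have "AE \<omega> in M. s x0 \<le> s (X \<omega>)"
    using assms(3) by (auto elim!: eventually_mono intro: IC_payment_mono[OF assms(5,2)])
  ultimately have "revenue M X q s = enn2ereal (\<integral>\<^sup>+ \<omega>. ennreal (s (X \<omega>) - s x0) \<partial>M) + ereal (s x0)"
    unfolding revenue_def by (rule ext_expectation_shift)
  also have "\<dots> \<le> ereal (lam - q x0) * Rev M X + ereal (s x0)"
    using payment_excess_le_Rev[OF assms] by (rule add_right_mono)
  finally show ?thesis .
qed

end
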